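(* Let \[ \mathfrak m=\left\{\begin{pmatrix} 0 & 0 & 0 & 0 & 0 & 0 & 0\\ u_1 & 0 & 0 & 0 & 0 & 0 & 0\\ u_2 & u_3 & 0 & 0 & 0 & 0 & 0\\ u_4 & 4u_2 & -4u_1 & 0 & 0 & 0 & 0\\ u_5 & -2u_4 & 0 & 4u_1 & 0 & 0 & 0\\ u_6 & 0 & 2u_4 & -4u_2 & -u_3 & 0 & 0\\ 0 & -u_6 & -u_5 & -u_4 & -u_2 & -u_1 & 0 \end{pmatrix} \;:\; u_1,\dots,u_6\in\mathbb R\right\}, \] a maximal nilpotent subalgebra of $\mathfrak g_{2(2)}$. Then $\mathfrak m$ does not contain a three-dimensional Lie subalgebra $\mathfrak b$ all of whose non-zero elements are matrices of rank two.
   Context: $\mathfrak g_{2(2)}$ is the Lie algebra of the split real form $\mathrm G_{2(2)}$ of $\mathrm G_2^{\mathbb C}$, realized (in a suitable Witt basis) as a subalgebra of $\mathfrak{so}_{4,3}$; $\mathfrak m$ is the set of strictly lower triangular matrices in this realization. *)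

theory Defs
  imports "HOL-Analysis.Analysis" "HOL-Library.Numeral_Type"
begin

text \<open>Rows/columns indexed by type 7 with elements 0,...,6 (index k here = row/column k+1
of the paper).\<close>

definition mmat :: "real \<Rightarrow> real \<Rightarrow> real \<Rightarrow> real \<Rightarrow> real \<Rightarrow> real \<Rightarrow> real^7^7" where
  "mmat u1 u2 u3 u4 u5 u6 = (\<chi> (i::7) (j::7).
     if (i,j) = (1,0) then u1
     else if (i,j) = (2,0) then u2
     else if (i,j) = (2,1) then u3
     else if (i,j) = (3,0) then u4
     else if (i,j) = (3,1) then 4*u2
     else if (i,j) = (3,2) then -4*u1
     else if (i,j) = (4,0) then u5
     else if (i,j) = (4,1) then -2*u4
     else if (i,j) = (4,3) then 4*u1
     else if (i,j) = (5,0) then u6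
     else if (i,j) = (5,2) then 2*u4
     else if (i,j) = (5,3) then -4*u2
     else if (i,j) = (5,4) then -u3
     else if (i,j) = (6,1) then -u6
     else if (i,j) = (6,2) then -u5
     else if (i,j) = (6,3) then -u4
     else if (i,j) = (6,4) then -u2
     else if (i,j) = (6,5) then -u1
     else 0)"

definition g2_m :: "(real^7^7) set" where
  "g2_m = {mmat u1 u2 u3 u4 u5 u6 | u1 u2 u3 u4 u5 u6. True}"

definition is_lie_subalgebra :: "(real^'n^'n) set \<Rightarrow> bool" where
  "is_lie_subalgebra B \<longleftrightarrow> subspace B \<and> (\<forall>X\<in>B. \<forall>Y\<in>B. X ** Y - Y ** X \<in> B)"

end

theory Submission
  imports Defs
begin

text \<open>
  Vanishing of suitable 3\<times>3 minors shows that a matrix of \<open>\<mathfrak>m\<close> of rank at most two has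
  \<open>u\<^sub>1 = 0\<close> and \<open>(u\<^sub>2, u\<^sub>3, u\<^sub>4, u\<^sub>5)\<close> on the cone over the twisted cubic
  \<open>(s\<^sup>2t, 2s\<^sup>3, 2st\<^sup>2, -2t\<^sup>3)\<close>. A secant of a twisted cubic meets it in only two points,
  so a linear subspace inside that cone is at most a line, while the matrices with
  \<open>u\<^sub>1 = \<dots> = u\<^sub>5 = 0\<close> form a line as well. Hence every subspace of \<open>\<mathfrak>m\<close> whose elements have
  rank at most two has dimension at most two.
\<close>

lemma rank_submatrix_le:
  fixes X :: "real^'n^'m" and r :: "'p::finite \<Rightarrow> 'm" and c :: "'q::finite \<Rightarrow> 'n"
  shows "rank (\<chi> k l. X $ r k $ c l) \<le> rank X"
proof -
  let ?P = "(\<chi> k i. of_bool (i = r k)) :: real^'m^'p"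
  let ?Q = "(\<chi> j l. of_bool (j = c l)) :: real^'q^'n"
  have "(\<chi> k l. X $ r k $ c l) = ?P ** X ** ?Q"
    by (simp add: vec_eq_iff matrix_matrix_mult_def)
  also have "rank \<dots> \<le> rank (?P ** X)"
    by (rule rank_mul_le_left)
  also have "\<dots> \<le> rank X"
    by (rule rank_mul_le_right)
  finally show ?thesis .
qed

lemma minor3_eq_0_if_rank_le_2:
  fixes X :: "real^'n^'m"
  assumes "rank X \<le> 2"
  shows "X$i1$j1 * X$i2$j2 * X$i3$j3 + X$i1$j2 * X$i2$j3 * X$i3$j1 + X$i1$j3 * X$i2$j1 * X$i3$j2
       - X$i1$j1 * X$i2$j3 * X$i3$j2 - X$i1$j2 * X$i2$j1 * X$i3$j3 - X$i1$j3 * X$i2$j2 * X$i3$j1 = 0"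
proof -
  define S where "S = (\<chi> k l. X $ (if k = (1::3) then i1 else if k = 2 then i2 else i3)
                                 $ (if l = (1::3) then j1 else if l = 2 then j2 else j3))"
  have "rank S \<le> rank X"
    unfolding S_def by (rule rank_submatrix_le)
  with assms have "det S = 0"
    by (simp add: det_eq_0_rank)
  then show ?thesis
    unfolding det_3 S_def by simp
qed

fun low_rank_cone :: "real \<times> real \<times> real \<times> real \<Rightarrow> bool" where
  "low_rank_cone (a, b, c, d) \<longleftrightarrow> 4 * a\<^sup>2 = b * c \<and> c\<^sup>2 + 2 * a * d = 0 \<and> b * d + 2 * a * c = 0"

lemma low_rank_cone_add_imp_parallel:
  assumes "low_rank_cone p" "low_rank_cone q" "low_rank_cone (p + q)" "p \<noteq> 0"
  shows "\<exists>l. q = l *\<^sub>R p"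
proof -
  obtain a b c d x y z w where pq: "p = (a, b, c, d)" "q = (x, y, z, w)"
    using prod_cases4 by metis
  have par: "a * y = b * x" "a * z = c * x" "a * w = d * x" "b * z = c * y" "b * w = d * y" "c * w = d * z"
    using assms(1-3) unfolding pq by (simp_all add: power2_eq_square) algebra+
  from assms(4) consider "a \<noteq> 0" | "b \<noteq> 0" | "c \<noteq> 0" | "d \<noteq> 0"
    unfolding pq by (auto simp: zero_prod_def)
  then show ?thesis
  proof cases
    case 1
    with par show ?thesis unfolding pq by (intro exI[of _ "x / a"]) (auto simp: field_simps)
  next
    case 2
    with par show ?thesis unfolding pq by (intro exI[of _ "y / b"]) (auto simp: field_simps)
  next
    case 3
    with par show ?thesis unfolding pq by (intro exI[of _ "z / c"]) (auto simp: field_simps)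
  next
    case 4
    with par show ?thesis unfolding pq by (intro exI[of _ "w / d"]) (auto simp: field_simps)
  qed
qed

lemma rank_mmat_le_2:
  assumes "rank (mmat u1 u2 u3 u4 u5 u6) \<le> 2"
  shows "u1 = 0 \<and> low_rank_cone (u2, u3, u4, u5)"
proof -
  \<comment> \<open>\<open>minor[of i1 j1 i2 j2 i3 j3]\<close>: rows \<open>i1, i2, i3\<close> and columns \<open>j1, j2, j3\<close>\<close>
  note minor = minor3_eq_0_if_rank_le_2[OF assms]
  have u1: "u1 = 0"
    using minor[of 1 0 3 2 4 3] by (simp add: mmat_def)
  show ?thesis
  proof (cases "u2 = 0")
    case True
    have "u4 = 0"
      using minor[of 3 0 5 2 6 3] True u1 by (simp add: mmat_def)
    moreover have "u3 * u5 = 0"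
      using minor[of 2 1 5 4 6 2] True u1 \<open>u4 = 0\<close> by (simp add: mmat_def)
    ultimately show ?thesis
      using True u1 by simp
  next
    case False
    have "4 * u2\<^sup>2 = u3 * u4"
      using minor[of 2 0 3 1 6 4] False u1 by (simp add: mmat_def power2_eq_square)
    moreover have "u2 * (u4\<^sup>2 + 2 * u2 * u5) = 0"
      using minor[of 2 0 5 2 6 3] u1 by (simp add: mmat_def power2_eq_square algebra_simps)
    moreover have "u2 * (u3 * u5 + 2 * u2 * u4) = 0"
      using minor[of 2 0 5 2 6 4] u1 by (simp add: mmat_def power2_eq_square algebra_simps)
    ultimately show ?thesis
      using False u1 by simp
  qed
qed

definition cone_coords :: "real^7^7 \<Rightarrow> real \<times> real \<times> real \<times> real" where
  "cone_coords X = (X$2$0, X$2$1, X$3$0, X$4$0)"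

lemma cone_coords_add: "cone_coords (X + Y) = cone_coords X + cone_coords Y"
  by (simp add: cone_coords_def)

lemma cone_coords_diff_scaleR: "cone_coords (X - c *\<^sub>R Y) = cone_coords X - c *\<^sub>R cone_coords Y"
  by (simp add: cone_coords_def)

lemma scaleR_mmat:
  "c *\<^sub>R mmat u1 u2 u3 u4 u5 u6 = mmat (c * u1) (c * u2) (c * u3) (c * u4) (c * u5) (c * u6)"
  by (simp add: mmat_def vec_eq_iff)

lemma g2_m_eq_mmat:
  assumes "X \<in> g2_m"
  shows "X = mmat (X$1$0) (X$2$0) (X$2$1) (X$3$0) (X$4$0) (X$5$0)"
proof -
  obtain u1 u2 u3 u4 u5 u6 where X: "X = mmat u1 u2 u3 u4 u5 u6"
    using assms unfolding g2_m_def by blast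
  have "X$1$0 = u1" "X$2$0 = u2" "X$2$1 = u3" "X$3$0 = u4" "X$4$0 = u5" "X$5$0 = u6"
    unfolding X by (simp_all add: mmat_def)
  then show ?thesis
    using X by simp
qed

lemma low_rank_cone_cone_coords:
  assumes "X \<in> g2_m" "rank X \<le> 2"
  shows "low_rank_cone (cone_coords X)"
  using rank_mmat_le_2 assms g2_m_eq_mmat unfolding cone_coords_def by metis

lemma cone_coords_eq_0_imp_scaleR_mmat:
  assumes "X \<in> g2_m" "rank X \<le> 2" "cone_coords X = 0"
  shows "X = X$5$0 *\<^sub>R mmat 0 0 0 0 0 1"
proof -
  have "X$1$0 = 0"
    using rank_mmat_le_2 assms(1,2) g2_m_eq_mmat by metis
  with assms(3) g2_m_eq_mmat[OF assms(1)] show ?thesis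
    by (simp add: cone_coords_def zero_prod_def scaleR_mmat)
qed

lemma dim_subspace_g2_m_le_2:
  assumes B: "subspace B" "B \<subseteq> g2_m" and rank: "\<forall>X\<in>B. rank X \<le> 2"
  shows "dim B \<le> 2"
proof -
  let ?E = "mmat 0 0 0 0 0 1"
  have cone: "low_rank_cone (cone_coords X)" if "X \<in> B" for X
    using low_rank_cone_cone_coords B(2) rank that by blast
  obtain X0 where "X0 \<in> B" and X0: "\<forall>Y\<in>B. \<exists>l. cone_coords Y = l *\<^sub>R cone_coords X0"
  proof (cases "\<exists>X0\<in>B. cone_coords X0 \<noteq> 0")
    case True
    then obtain X0 where "X0 \<in> B" "cone_coords X0 \<noteq> 0"
      by blast
    moreover have "\<exists>l. cone_coords Y = l *\<^sub>R cone_coords X0" if "Y \<in> B" for Y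
    proof (rule low_rank_cone_add_imp_parallel)
      have "X0 + Y \<in> B"
        using B(1) \<open>X0 \<in> B\<close> that by (rule subspace_add)
      from cone[OF this] show "low_rank_cone (cone_coords X0 + cone_coords Y)"
        by (simp only: cone_coords_add)
    qed (use cone \<open>X0 \<in> B\<close> that \<open>cone_coords X0 \<noteq> 0\<close> in auto)
    ultimately show ?thesis
      using that by blast
  next
    case False
    then show ?thesis
      using that[of 0] subspace_0[OF B(1)] by auto
  qed
  have "B \<subseteq> span {X0, ?E}"
  proof
    fix Y
    assume "Y \<in> B"
    then obtain l where l: "cone_coords Y = l *\<^sub>R cone_coords X0"
      using X0 by blast
    define Z where "Z = Y - l *\<^sub>R X0"
    have "Z \<in> B"
      unfolding Z_def using B(1) \<open>Y \<in> B\<close> \<open>X0 \<in> B\<close> by (simp add: subspace_diff subspace_scale)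
    moreover have "cone_coords Z = 0"
      using l by (simp add: Z_def cone_coords_diff_scaleR)
    ultimately have "Z = Z$5$0 *\<^sub>R ?E"
      using cone_coords_eq_0_imp_scaleR_mmat B(2) rank by blast
    then have "Y = l *\<^sub>R X0 + Z$5$0 *\<^sub>R ?E"
      unfolding Z_def by (metis diff_add_cancel add.commute)
    then show "Y \<in> span {X0, ?E}"
      by (simp add: span_add span_mul span_base)
  qed
  then have "dim B \<le> card {X0, ?E}"
    by (rule dim_le_card) simp
  also have "\<dots> \<le> 2"
    by (simp add: card_insert_le_m1)
  finally show ?thesis .
qed

theorem lemma3p7:
  shows "\<not> (\<exists>B. B \<subseteq> g2_m \<and> is_lie_subalgebra B \<and> dim B = 3 \<and>
              (\<forall>X\<in>B. X \<noteq> 0 \<longrightarrow> rank X = 2))"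
proof
  assume "\<exists>B. B \<subseteq> g2_m \<and> is_lie_subalgebra B \<and> dim B = 3 \<and>
              (\<forall>X\<in>B. X \<noteq> 0 \<longrightarrow> rank X = 2)"
  then obtain B where B: "B \<subseteq> g2_m" "is_lie_subalgebra B" "dim B = 3"
    and rank2: "\<forall>X\<in>B. X \<noteq> 0 \<longrightarrow> rank X = 2"
    by blast
  have "subspace B"
    using B(2) by (simp add: is_lie_subalgebra_def)
  moreover have "\<forall>X\<in>B. rank X \<le> 2"
    using rank2 by (metis order.refl rank_0 zero_le)
  ultimately have "dim B \<le> 2"
    using B(1) dim_subspace_g2_m_le_2 by blast
  with B(3) show False
    by simp
qed

end
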